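(* Let $\Omega\subset\mathbb{R}^n$ be an open set, $K\subset\Omega$ a non-empty compact set, and $\lambda>0$. Let $\chi_K:\mathbb{R}^n\to\{0,1\}$ be the characteristic function of $K$ and $\chi_K^\Omega$ its restriction to $\overline\Omega$. If $\mathrm{dist}^2(K,\partial\Omega)>1/\lambda$, then for every $x\in\overline\Omega$, $$M^{\lambda}_{\Omega}(\chi_K^\Omega)(x)=M^\lambda(\chi_K)(x),\qquad M_{\lambda,\Omega}(M^{\lambda}_{\Omega}(\chi_K^\Omega))(x)=M_\lambda(M^\lambda(\chi_K))(x),$$ and consequently, setting $C^u_{\lambda,\Omega}(\chi_K^\Omega)(x)=M_{\lambda,\Omega}(M^{\lambda}_{\Omega}(\chi_K^\Omega))(x)$, we have $C^u_{\lambda,\Omega}(\chi_K^\Omega)(x)=C^u_\lambda(\chi_K)(x)$.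
   Context: $\mathrm{dist}(K,\partial\Omega)=\inf\{|x-y|:x\in K,\,y\in\partial\Omega\}$. For bounded $g:\mathbb{R}^n\to\mathbb{R}$: $M_\lambda(g)(x)=\inf_{y\in\mathbb{R}^n}\{g(y)+\lambda|y-x|^2\}$, $M^\lambda(g)(x)=\sup_{y\in\mathbb{R}^n}\{g(y)-\lambda|y-x|^2\}$. For bounded $g:\overline\Omega\to\mathbb{R}$ and $x\in\overline\Omega$: $M_{\lambda,\Omega}(g)(x)=\inf_{y\in\overline\Omega}\{g(y)+\lambda|y-x|^2\}$, $M^{\lambda}_{\Omega}(g)(x)=\sup_{y\in\overline\Omega}\{g(y)-\lambda|y-x|^2\}$. The upper compensated convex transform is $C^u_\lambda(g)(x)=\lambda|x|^2-\mathrm{co}[\lambda|\cdot|^2-g](x)$, with $\mathrm{co}$ the convex envelope. *)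

theory Defs
  imports "HOL-Analysis.Analysis"
begin

definition lower_env :: "real \<Rightarrow> ('a::euclidean_space \<Rightarrow> real) \<Rightarrow> 'a \<Rightarrow> real" where
  "lower_env lam g x = (INF y. g y + lam * (norm (y - x))^2)"

definition upper_env :: "real \<Rightarrow> ('a::euclidean_space \<Rightarrow> real) \<Rightarrow> 'a \<Rightarrow> real" where
  "upper_env lam g x = (SUP y. g y - lam * (norm (y - x))^2)"

definition lower_env_on :: "'a::euclidean_space set \<Rightarrow> real \<Rightarrow> ('a \<Rightarrow> real) \<Rightarrow> 'a \<Rightarrow> real" where
  "lower_env_on Om lam g x = (INF y\<in>closure Om. g y + lam * (norm (y - x))^2)"

definition upper_env_on :: "'a::euclidean_space set \<Rightarrow> real \<Rightarrow> ('a \<Rightarrow> real) \<Rightarrow> 'a \<Rightarrow> real" where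
  "upper_env_on Om lam g x = (SUP y\<in>closure Om. g y - lam * (norm (y - x))^2)"

definition convex_envelope :: "('a::euclidean_space \<Rightarrow> real) \<Rightarrow> 'a \<Rightarrow> real" where
  "convex_envelope f x = (SUP g\<in>{g. convex_on UNIV g \<and> (\<forall>y. g y \<le> f y)}. g x)"

definition upper_cc_transform :: "real \<Rightarrow> ('a::euclidean_space \<Rightarrow> real) \<Rightarrow> 'a \<Rightarrow> real" where
  "upper_cc_transform lam g x =
     lam * (norm x)^2 - convex_envelope (\<lambda>y. lam * (norm y)^2 - g y) x"

end

(*
  Outside K the upper envelope of the indicator is governed by the distance to K: at a point z with
  lam dist(z, K)^2 > 1 it is 0, its minimum. So on the frontier of Om the upper envelope vanishes,
  and restricting the supremum to closure Om loses nothing because points outside contribute at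
  most 0. Restricting the infimum in the lower envelope loses nothing either: a point y outside
  closure Om can be replaced by the point where the segment from x to y crosses the frontier,
  which is nearer to x and carries the minimal value 0.

  The identity with the upper compensated convex transform holds for every bounded g:
  lam |x|^2 - lower_env lam (upper_env lam g) x is a supremum of affine functions of x, hence
  convex and below lam |.|^2 - g, and every affine minorant of lam |.|^2 - g (in particular the
  supporting hyperplane of a convex minorant) stays below it.
*)
theory Submission
  imports Defs
begin

lemma upper_env_upper:
  fixes g :: "'a::euclidean_space \<Rightarrow> real"
  assumes "bdd_above (range g)" and "lam \<ge> 0"
  shows "g y - lam * (norm (y - x))^2 \<le> upper_env lam g x"
proof -
  obtain M where "\<And>z. g z \<le> M" using assms(1) by (auto simp: bdd_above_def)
  then have "bdd_above (range (\<lambda>z. g z - lam * (norm (z - x))^2))"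
    using assms(2) by (intro bdd_aboveI2[where M = M]) (smt (verit) zero_le_mult_iff zero_le_power2)
  then show ?thesis unfolding upper_env_def by (rule cSUP_upper[OF UNIV_I])
qed

lemma upper_env_least:
  assumes "\<And>y. g y - lam * (norm (y - x))^2 \<le> c"
  shows "upper_env lam g x \<le> c"
  unfolding upper_env_def using assms by (intro cSUP_least) auto

lemma le_upper_env:
  fixes g :: "'a::euclidean_space \<Rightarrow> real"
  assumes "bdd_above (range g)" and "lam \<ge> 0"
  shows "g x \<le> upper_env lam g x"
  using upper_env_upper[OF assms, of x x] by simp

lemma bdd_below_upper_env:
  fixes g :: "'a::euclidean_space \<Rightarrow> real"
  assumes "bdd_above (range g)" and "bdd_below (range g)" and "lam \<ge> 0"
  shows "bdd_below (range (upper_env lam g))"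
proof -
  obtain m where "\<And>z. m \<le> g z" using assms(2) by (auto simp: bdd_below_def)
  then show ?thesis
    using le_upper_env[OF assms(1,3)] by (intro bdd_belowI2[where m = m]) (meson order_trans)
qed

lemma lower_env_lower:
  fixes g :: "'a::euclidean_space \<Rightarrow> real"
  assumes "bdd_below (range g)" and "lam \<ge> 0"
  shows "lower_env lam g x \<le> g y + lam * (norm (y - x))^2"
proof -
  obtain m where "\<And>z. m \<le> g z" using assms(1) by (auto simp: bdd_below_def)
  then have "bdd_below (range (\<lambda>z. g z + lam * (norm (z - x))^2))"
    using assms(2) by (intro bdd_belowI2[where m = m]) (smt (verit) zero_le_mult_iff zero_le_power2)
  then show ?thesis unfolding lower_env_def by (rule cINF_lower[OF _ UNIV_I])
qed

lemma lower_env_greatest: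
  assumes "\<And>y. c \<le> g y + lam * (norm (y - x))^2"
  shows "c \<le> lower_env lam g x"
  unfolding lower_env_def using assms by (intro cINF_greatest) auto

lemma le_lower_upper_env:
  fixes g :: "'a::euclidean_space \<Rightarrow> real"
  assumes "bdd_above (range g)" and "lam \<ge> 0"
  shows "g x \<le> lower_env lam (upper_env lam g) x"
proof (rule lower_env_greatest)
  fix y
  show "g x \<le> upper_env lam g y + lam * (norm (y - x))^2"
    using upper_env_upper[OF assms, of x y] by (simp add: norm_minus_commute)
qed

lemma norm_diff_power2: "(norm (y - c))^2 = (norm y)^2 - 2 * (y \<bullet> c) + (norm (c::'a::real_inner))^2"
  by (simp add: power2_norm_eq_inner inner_diff_left inner_diff_right inner_commute)

lemma convex_on_sq_minus_lower_env:
  fixes h :: "'a::euclidean_space \<Rightarrow> real"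
  assumes "bdd_below (range h)" and "lam \<ge> 0"
  shows "convex_on UNIV (\<lambda>x. lam * (norm x)^2 - lower_env lam h x)"
proof (rule convex_onI)
  fix t :: real and a b :: 'a
  assume t: "0 < t" "t < 1"
  define c where "c = (1 - t) *\<^sub>R a + t *\<^sub>R b"
  have "lam * (norm c)^2 + (1 - t) * (lower_env lam h a - lam * (norm a)^2)
          + t * (lower_env lam h b - lam * (norm b)^2) \<le> lower_env lam h c"
  proof (rule lower_env_greatest)
    fix y
    \<comment> \<open>For fixed y, x \<mapsto> h y + lam |y - x|^2 - lam |x|^2 is affine.\<close>
    have affine: "h y + lam * (norm (y - c))^2 - lam * (norm c)^2
        = (1 - t) * (h y + lam * (norm (y - a))^2 - lam * (norm a)^2)
          + t * (h y + lam * (norm (y - b))^2 - lam * (norm b)^2)"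
      unfolding norm_diff_power2 c_def by (simp add: inner_add_right algebra_simps)
    have "(1 - t) * (lower_env lam h a - lam * (norm a)^2)
          \<le> (1 - t) * (h y + lam * (norm (y - a))^2 - lam * (norm a)^2)"
      using lower_env_lower[OF assms, of a y] t by (intro mult_left_mono) auto
    moreover have "t * (lower_env lam h b - lam * (norm b)^2)
          \<le> t * (h y + lam * (norm (y - b))^2 - lam * (norm b)^2)"
      using lower_env_lower[OF assms, of b y] t by (intro mult_left_mono) auto
    ultimately show "lam * (norm c)^2 + (1 - t) * (lower_env lam h a - lam * (norm a)^2)
          + t * (lower_env lam h b - lam * (norm b)^2) \<le> h y + lam * (norm (y - c))^2"
      using affine by linarith
  qed
  then show "lam * (norm c)^2 - lower_env lam h c
      \<le> (1 - t) * (lam * (norm a)^2 - lower_env lam h a) + t * (lam * (norm b)^2 - lower_env lam h b)"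
    by (simp add: algebra_simps)
qed simp

lemma affine_minorant_le_sq_minus_lower_upper_env:
  fixes g :: "'a::euclidean_space \<Rightarrow> real"
  assumes "lam > 0" and "bdd_above (range g)" and "bdd_below (range g)"
    and minorant: "\<And>z. a + q \<bullet> z \<le> lam * (norm z)^2 - g z"
  shows "a + q \<bullet> x \<le> lam * (norm x)^2 - lower_env lam (upper_env lam g) x"
proof -
  \<comment> \<open>Completing the square: lam |z|^2 - q \<bullet> z = lam |z - y|^2 - lam |y|^2.\<close>
  define y where "y = (1 / (2 * lam)) *\<^sub>R q"
  have q: "q = (2 * lam) *\<^sub>R y" unfolding y_def using assms(1) by simp
  have "upper_env lam g y \<le> lam * (norm x)^2 - (a + q \<bullet> x) - lam * (norm (y - x))^2"
  proof (rule upper_env_least)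
    fix z
    have "lam * (norm z)^2 - q \<bullet> z - lam * (norm (z - y))^2
        = lam * (norm x)^2 - q \<bullet> x - lam * (norm (y - x))^2"
      unfolding q norm_diff_power2 by (simp add: inner_commute algebra_simps)
    then show "g z - lam * (norm (z - y))^2 \<le> lam * (norm x)^2 - (a + q \<bullet> x) - lam * (norm (y - x))^2"
      using minorant[of z] by linarith
  qed
  moreover have "lower_env lam (upper_env lam g) x \<le> upper_env lam g y + lam * (norm (y - x))^2"
    using assms(1-3) by (intro lower_env_lower bdd_below_upper_env) auto
  ultimately show ?thesis by linarith
qed

lemma convex_strict_epigraph:
  assumes "convex_on UNIV phi"
  shows "convex {(z, t). phi z < t}"
  unfolding convex_def
proof clarsimp
  fix z1 t1 z2 t2 and u v :: real
  assume h: "phi z1 < t1" "phi z2 < t2" "0 \<le> u" "0 \<le> v" "u + v = 1"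
  have "phi (u *\<^sub>R z1 + v *\<^sub>R z2) \<le> u * phi z1 + v * phi z2"
    using assms h unfolding convex_on_def by blast
  also have "\<dots> < u * t1 + v * t2"
    using h by (cases "u = 0") (auto intro!: add_less_le_mono mult_strict_left_mono mult_left_mono)
  finally show "phi (u *\<^sub>R z1 + v *\<^sub>R z2) < u * t1 + v * t2" .
qed

lemma convex_on_UNIV_subgradient:
  fixes phi :: "'a::euclidean_space \<Rightarrow> real"
  assumes "convex_on UNIV phi"
  obtains q where "\<And>z. phi x + q \<bullet> (z - x) \<le> phi z"
proof -
  obtain a b where "a \<noteq> 0" and below: "\<forall>w\<in>{(z, t). phi z < t}. a \<bullet> w \<le> b"
    and above: "\<forall>w\<in>{(x, phi x)}. b \<le> a \<bullet> w"
    using separating_hyperplane_sets[OF convex_strict_epigraph[OF assms], of "{(x, phi x)}"]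
    by (auto simp: gt_ex)
  obtain p c where a: "a = (p, c)" by fastforce
  have support: "p \<bullet> z + c * t \<le> p \<bullet> x + c * phi x" if "phi z < t" for z t
    using below above that unfolding a by (force simp: inner_Pair)
  have "c \<le> 0"
    using support[of x "phi x + 1"] by (simp add: algebra_simps)
  moreover have "c \<noteq> 0"
  proof
    assume "c = 0"
    then have "p \<bullet> p \<le> 0"
      using support[of "x + p" "phi (x + p) + 1"] by (simp add: inner_add_right)
    then have "p = 0" by (metis antisym inner_eq_zero_iff inner_ge_zero)
    then show False using \<open>a \<noteq> 0\<close> \<open>c = 0\<close> a by (simp add: zero_prod_def)
  qed
  ultimately have "c < 0" by simp
  have "phi x + ((-1 / c) *\<^sub>R p) \<bullet> (z - x) \<le> phi z" for z
  proof (rule field_le_epsilon)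
    fix e :: real assume "e > 0"
    then have "p \<bullet> (z - x) \<le> - c * (phi z + e - phi x)"
      using support[of z "phi z + e"] by (simp add: inner_diff_right algebra_simps)
    then show "phi x + ((-1 / c) *\<^sub>R p) \<bullet> (z - x) \<le> phi z + e"
      using \<open>c < 0\<close> by (simp add: field_simps)
  qed
  then show ?thesis using that by blast
qed

lemma convex_envelope_eqI:
  fixes f h :: "'a::euclidean_space \<Rightarrow> real"
  assumes "convex_on UNIV h" and "\<And>y. h y \<le> f y"
    and greatest: "\<And>phi y. convex_on UNIV phi \<Longrightarrow> (\<And>z. phi z \<le> f z) \<Longrightarrow> phi y \<le> h y"
  shows "convex_envelope f = h"
proof
  fix x
  define C where "C = {phi. convex_on UNIV phi \<and> (\<forall>y. phi y \<le> f y)}"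
  have "h \<in> C" using assms(1,2) unfolding C_def by blast
  moreover have "bdd_above ((\<lambda>phi. phi x) ` C)"
    by (rule bdd_aboveI2[where M = "f x"]) (auto simp: C_def)
  ultimately have "h x \<le> (SUP phi\<in>C. phi x)" by (rule cSUP_upper)
  moreover have "(SUP phi\<in>C. phi x) \<le> h x"
    using \<open>h \<in> C\<close> greatest by (intro cSUP_least) (auto simp: C_def)
  ultimately show "convex_envelope f x = h x"
    unfolding convex_envelope_def C_def by simp
qed

theorem upper_cc_transform_eq_lower_upper_env:
  fixes g :: "'a::euclidean_space \<Rightarrow> real"
  assumes "lam > 0" and "bdd_above (range g)" and "bdd_below (range g)"
  shows "upper_cc_transform lam g x = lower_env lam (upper_env lam g) x"
proof -
  have "convex_envelope (\<lambda>y. lam * (norm y)^2 - g y)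
      = (\<lambda>y. lam * (norm y)^2 - lower_env lam (upper_env lam g) y)"
  proof (rule convex_envelope_eqI)
    show "convex_on UNIV (\<lambda>y. lam * (norm y)^2 - lower_env lam (upper_env lam g) y)"
      using assms by (intro convex_on_sq_minus_lower_env bdd_below_upper_env) auto
    show "lam * (norm y)^2 - lower_env lam (upper_env lam g) y \<le> lam * (norm y)^2 - g y" for y
      using le_lower_upper_env[OF assms(2)] assms(1) by simp
  next
    fix phi y
    assume "convex_on UNIV phi" and "\<And>z. phi z \<le> lam * (norm z)^2 - g z"
    moreover obtain q where "\<And>z. phi y + q \<bullet> (z - y) \<le> phi z"
      using convex_on_UNIV_subgradient[OF \<open>convex_on UNIV phi\<close>] by blast
    ultimately have "(phi y - q \<bullet> y) + q \<bullet> z \<le> lam * (norm z)^2 - g z" for z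
      by (smt (verit) inner_diff_right)
    from affine_minorant_le_sq_minus_lower_upper_env[OF assms this, of y]
    show "phi y \<le> lam * (norm y)^2 - lower_env lam (upper_env lam g) y" by simp
  qed
  then show ?thesis unfolding upper_cc_transform_def by simp
qed

lemma upper_env_on_eq_upper_env:
  fixes g :: "'a::euclidean_space \<Rightarrow> real"
  assumes "bdd_above (range g)" and "lam \<ge> 0"
    and "\<And>y. 0 \<le> g y" and "\<And>y. y \<notin> closure Om \<Longrightarrow> g y = 0"
    and x: "x \<in> closure Om"
  shows "upper_env_on Om lam g x = upper_env lam g x"
proof (rule antisym)
  show "upper_env_on Om lam g x \<le> upper_env lam g x"
    unfolding upper_env_on_def using x by (intro cSUP_least upper_env_upper assms(1,2)) auto
  have "bdd_above ((\<lambda>y. g y - lam * (norm (y - x))^2) ` closure Om)"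
    using upper_env_upper[OF assms(1,2)] by (intro bdd_aboveI2) blast
  then have in_closure: "g y - lam * (norm (y - x))^2 \<le> upper_env_on Om lam g x"
    if "y \<in> closure Om" for y
    unfolding upper_env_on_def using that by (rule cSUP_upper2) simp
  show "upper_env lam g x \<le> upper_env_on Om lam g x"
  proof (rule upper_env_least)
    fix y
    show "g y - lam * (norm (y - x))^2 \<le> upper_env_on Om lam g x"
    proof (cases "y \<in> closure Om")
      case False
      moreover have "0 \<le> lam * (norm (y - x))^2" using assms(2) by simp
      ultimately have "g y - lam * (norm (y - x))^2 \<le> g x - lam * (norm (x - x))^2"
        using assms(3)[of x] assms(4)[OF False] by simp
      then show ?thesis using in_closure[OF x] by linarith
    qed (rule in_closure)
  qed
qed

lemma closed_segment_meets_frontier: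
  fixes Om :: "'a::euclidean_space set"
  assumes "x \<in> closure Om" and "y \<notin> closure Om"
  obtains z where "z \<in> closed_segment x y" and "z \<in> frontier Om"
proof -
  have "closed_segment x y \<inter> frontier (closure Om) \<noteq> {}"
    using assms by (intro connected_Int_frontier) auto
  moreover have "frontier (closure Om) \<subseteq> frontier Om"
    using interior_mono[OF closure_subset[of Om]] by (auto simp: frontier_def)
  ultimately show ?thesis using that by blast
qed

lemma lower_env_on_eq_lower_env:
  fixes u :: "'a::euclidean_space \<Rightarrow> real"
  assumes "lam \<ge> 0" and nonneg: "\<And>y. 0 \<le> u y" and "\<And>z. z \<in> frontier Om \<Longrightarrow> u z \<le> 0"
    and x: "x \<in> closure Om"
  shows "lower_env_on Om lam u x = lower_env lam u x"
proof (rule antisym)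
  have bdd: "bdd_below (range u)" using nonneg by (intro bdd_belowI2) blast
  show "lower_env lam u x \<le> lower_env_on Om lam u x"
    unfolding lower_env_on_def using x by (intro cINF_greatest lower_env_lower bdd assms(1)) auto
  have "bdd_below ((\<lambda>y. u y + lam * (norm (y - x))^2) ` closure Om)"
    using lower_env_lower[OF bdd assms(1)] by (intro bdd_belowI2) blast
  then have in_closure: "lower_env_on Om lam u x \<le> u y + lam * (norm (y - x))^2"
    if "y \<in> closure Om" for y
    unfolding lower_env_on_def using that by (rule cINF_lower2) simp
  show "lower_env_on Om lam u x \<le> lower_env lam u x"
  proof (rule lower_env_greatest)
    fix y
    show "lower_env_on Om lam u x \<le> u y + lam * (norm (y - x))^2"
    proof (cases "y \<in> closure Om")
      case False
      \<comment> \<open>Replace y by the frontier point z of the segment from x to y: it is nearer to x and u z = 0 \<le> u y.\<close>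
      obtain z where z: "z \<in> closed_segment x y" "z \<in> frontier Om"
        using closed_segment_meets_frontier[OF x False] by blast
      have "norm (z - x) \<le> norm (y - x)"
        using dist_in_closed_segment[OF z(1)] by (simp add: dist_norm norm_minus_commute)
      then have "u z + lam * (norm (z - x))^2 \<le> u y + lam * (norm (y - x))^2"
        using assms(1) assms(3)[OF z(2)] nonneg[of y]
        by (smt (verit) mult_left_mono norm_ge_zero power_mono)
      moreover have "z \<in> closure Om" using z(2) by (simp add: frontier_def)
      ultimately show ?thesis using in_closure by force
    qed (rule in_closure)
  qed
qed

lemma upper_env_indicator_nonpos:
  fixes K T :: "'a::euclidean_space set"
  assumes "lam > 0" and "(setdist K T)^2 > 1 / lam" and "z \<in> T"
  shows "upper_env lam (indicator K) z \<le> 0"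
proof (rule upper_env_least)
  fix w
  show "indicator K w - lam * (norm (w - z))^2 \<le> 0"
  proof (cases "w \<in> K")
    case True
    then have "(setdist K T)^2 \<le> (norm (w - z))^2"
      using setdist_le_dist[OF True assms(3)] setdist_pos_le
      by (simp add: dist_norm power_mono)
    moreover have "1 < lam * (setdist K T)^2"
      using assms(1,2) by (simp add: field_simps)
    ultimately have "1 < lam * (norm (w - z))^2"
      using assms(1) by (smt (verit) mult_left_mono)
    then show ?thesis using True by simp
  qed (use assms(1) in simp)
qed

theorem theorem3p7:
  fixes Om K :: "'a::euclidean_space set" and lam :: real
  assumes "open Om" and "compact K" and "K \<noteq> {}" and "K \<subseteq> Om" and "lam > 0"
    and "frontier Om = {} \<or> (setdist K (frontier Om))^2 > 1 / lam"
  shows "\<forall>x\<in>closure Om.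
           upper_env_on Om lam (indicator K) x = upper_env lam (indicator K) x \<and>
           lower_env_on Om lam (upper_env_on Om lam (indicator K)) x
             = lower_env lam (upper_env lam (indicator K)) x \<and>
           lower_env_on Om lam (upper_env_on Om lam (indicator K)) x
             = upper_cc_transform lam (indicator K) x"
proof -
  let ?f = "indicator K :: 'a \<Rightarrow> real"
  have lam: "lam \<ge> 0" using assms(5) by simp
  have above: "bdd_above (range ?f)" and below: "bdd_below (range ?f)"
    by (auto intro!: bdd_aboveI2[where M = 1] bdd_belowI2[where m = 0] simp: indicator_def)
  have off_closure: "?f y = 0" if "y \<notin> closure Om" for y
    using that assms(4) closure_subset by (auto simp: indicator_def)
  have upper_nonneg: "0 \<le> upper_env lam ?f y" for y
    using le_upper_env[OF above lam, of y] by (meson indicator_pos_le order_trans)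
  have upper_on_frontier: "upper_env lam ?f z \<le> 0" if "z \<in> frontier Om" for z
    using assms(5,6) that by (auto intro: upper_env_indicator_nonpos)
  have upper_eq: "upper_env_on Om lam ?f y = upper_env lam ?f y" if "y \<in> closure Om" for y
    using above lam off_closure that by (intro upper_env_on_eq_upper_env) auto
  show ?thesis
  proof
    fix x assume x: "x \<in> closure Om"
    have "lower_env_on Om lam (upper_env_on Om lam ?f) x = lower_env_on Om lam (upper_env lam ?f) x"
      unfolding lower_env_on_def using upper_eq by simp
    also have "\<dots> = lower_env lam (upper_env lam ?f) x"
      using lam upper_nonneg upper_on_frontier x by (rule lower_env_on_eq_lower_env)
    finally show "upper_env_on Om lam ?f x = upper_env lam ?f x \<and>
        lower_env_on Om lam (upper_env_on Om lam ?f) x = lower_env lam (upper_env lam ?f) x \<and>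
        lower_env_on Om lam (upper_env_on Om lam ?f) x = upper_cc_transform lam ?f x"
      using upper_eq[OF x] upper_cc_transform_eq_lower_upper_env[OF assms(5) above below] by simp
  qed
qed

end
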